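(* Let $T$ be a $\delta$-Jordan Lie supertriple system over a field $\mathbb{K}$. Then $[C(T),QC(T)]\subseteq End(T,Z(T))$, i.e. for all homogeneous $D_1\in C(T)$ and $D_2\in QC(T)$ the map $[D_1,D_2]=D_1D_2-(-1)^{|D_1||D_2|}D_2D_1$ sends $T$ into $Z(T)$. Moreover, if $Z(T)=\{0\}$, then $[C(T),QC(T)]=\{0\}$.
   Context: A $\delta$-Jordan Lie supertriple system ($\delta\in\{1,-1\}$) is a $\mathbb{Z}_2$-graded vector space $T=T_{\bar 0}\oplus T_{\bar 1}$ with a trilinear product $[\cdot,\cdot,\cdot]$ such that, for all homogeneous $a,b,c,d,e$ (with $|a|$ the degree of $a$): $|[a,b,c]|=|a|+|b|+|c|$; $[b,a,c]=-\delta(-1)^{|a||b|}[a,b,c]$; $(-1)^{|a||c|}[a,b,c]+(-1)^{|b||a|}[b,c,a]+(-1)^{|c||b|}[c,a,b]=0$; and $[a,b,[c,d,e]]=[[a,b,c],d,e]+(-1)^{|c|(|a|+|b|)}[c,[a,b,d],e]+\delta(-1)^{(|a|+|b|)(|c|+|d|)}[c,d,[a,b,e]]$. $End(T)$ is the $\mathbb{Z}_2$-graded space of linear maps $T\to T$ with Lie superbracket $[D,D']=DD'-(-1)^{|D||D'|}D'D$; $End(T,Z(T))$ denotes the linear maps $T\to T$ with image in $Z(T)$. For a nonnegative integer $k$, $C^k(T)$ is the set of homogeneous $D\in End(T)$ with $\delta^{k}[D(a),b,c]=\delta^{k}(-1)^{|D||a|}[a,D(b),c]=\delta^{k}(-1)^{|D|(|a|+|b|)}[a,b,D(c)]=D([a,b,c])$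 for all homogeneous $a,b,c$; the centroid is $C(T)=\bigoplus_{k\ge0}C^k(T)$. The quasicentroid is $QC(T)=\{D\in End(T)\mid D([a,b,c])=[D(a),b,c]\ \forall a,b,c\in T\}$. The center is $Z(T)=\{a\in T\mid [a,b,c]=0\ \forall b,c\in T\}$. *)

theory Defs
  imports Complex_Main
begin

text \<open>A Z2-graded vector space over a field: the vector space is given by the
 scalar multiplication scale; G 0 and G 1 are the even and odd parts
 (degrees are naturals 0 and 1).\<close>

definition graded_space :: "('k::field \<Rightarrow> 'v::ab_group_add \<Rightarrow> 'v) \<Rightarrow> (nat \<Rightarrow> 'v set) \<Rightarrow> bool" where
  "graded_space scale G \<longleftrightarrow> Vector_Spaces.vector_space scale
     \<and> (\<forall>i<2. 0 \<in> G i \<and> (\<forall>x\<in>G i. \<forall>y\<in>G i. x + y \<in> G i)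
                 \<and> (\<forall>c. \<forall>x\<in>G i. scale c x \<in> G i))
     \<and> G 0 \<inter> G 1 = {0}
     \<and> (\<forall>v. \<exists>a\<in>G 0. \<exists>b\<in>G 1. v = a + b)"

definition trilinear :: "('k::field \<Rightarrow> 'v::ab_group_add \<Rightarrow> 'v) \<Rightarrow> ('v \<Rightarrow> 'v \<Rightarrow> 'v \<Rightarrow> 'v) \<Rightarrow> bool" where
  "trilinear scale br \<longleftrightarrow>
     (\<forall>b c. Vector_Spaces.linear scale scale (\<lambda>a. br a b c))
   \<and> (\<forall>a c. Vector_Spaces.linear scale scale (\<lambda>b. br a b c))
   \<and> (\<forall>a b. Vector_Spaces.linear scale scale (\<lambda>c. br a b c))"

definition djlsts :: "('k::field \<Rightarrow> 'v::ab_group_add \<Rightarrow> 'v) \<Rightarrow> 'k \<Rightarrow> (nat \<Rightarrow> 'v set)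
    \<Rightarrow> ('v \<Rightarrow> 'v \<Rightarrow> 'v \<Rightarrow> 'v) \<Rightarrow> bool" where
  "djlsts scale \<delta> G br \<longleftrightarrow> graded_space scale G \<and> (\<delta> = 1 \<or> \<delta> = -1) \<and> trilinear scale br
   \<and> (\<forall>i<2. \<forall>j<2. \<forall>k<2. \<forall>a\<in>G i. \<forall>b\<in>G j. \<forall>c\<in>G k.
        br a b c \<in> G ((i + j + k) mod 2)
      \<and> br b a c = scale (- \<delta> * (-1) ^ (i * j)) (br a b c)
      \<and> scale ((-1) ^ (i * k)) (br a b c) + scale ((-1) ^ (j * i)) (br b c a)
          + scale ((-1) ^ (k * j)) (br c a b) = 0
      \<and> (\<forall>l<2. \<forall>m<2. \<forall>d\<in>G l. \<forall>e\<in>G m.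
          br a b (br c d e) = br (br a b c) d e
             + scale ((-1) ^ (k * (i + j))) (br c (br a b d) e)
             + scale (\<delta> * (-1) ^ ((i + j) * (k + l))) (br c d (br a b e))))"

definition hom_end :: "('k::field \<Rightarrow> 'v::ab_group_add \<Rightarrow> 'v) \<Rightarrow> (nat \<Rightarrow> 'v set) \<Rightarrow> ('v \<Rightarrow> 'v) \<Rightarrow> nat \<Rightarrow> bool" where
  "hom_end scale G D d \<longleftrightarrow> Vector_Spaces.linear scale scale D \<and> d < 2
     \<and> (\<forall>i<2. \<forall>a\<in>G i. D a \<in> G ((i + d) mod 2))"

definition centroid_k :: "('k::field \<Rightarrow> 'v::ab_group_add \<Rightarrow> 'v) \<Rightarrow> 'k \<Rightarrow> (nat \<Rightarrow> 'v set)
    \<Rightarrow> ('v \<Rightarrow> 'v \<Rightarrow> 'v \<Rightarrow> 'v) \<Rightarrow> nat \<Rightarrow> ('v \<Rightarrow> 'v) set" where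
  "centroid_k scale \<delta> G br k = {D. \<exists>dD. hom_end scale G D dD \<and>
     (\<forall>i<2. \<forall>j<2. \<forall>l<2. \<forall>a\<in>G i. \<forall>b\<in>G j. \<forall>c\<in>G l.
        scale (\<delta> ^ k) (br (D a) b c) = D (br a b c)
      \<and> scale (\<delta> ^ k * (-1) ^ (dD * i)) (br a (D b) c) = D (br a b c)
      \<and> scale (\<delta> ^ k * (-1) ^ (dD * (i + j))) (br a b (D c)) = D (br a b c))}"

inductive_set centroid :: "('k::field \<Rightarrow> 'v::ab_group_add \<Rightarrow> 'v) \<Rightarrow> 'k \<Rightarrow> (nat \<Rightarrow> 'v set)
    \<Rightarrow> ('v \<Rightarrow> 'v \<Rightarrow> 'v \<Rightarrow> 'v) \<Rightarrow> ('v \<Rightarrow> 'v) set"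
  for scale \<delta> G br where
  zero: "(\<lambda>x. 0) \<in> centroid scale \<delta> G br"
| comp: "D \<in> centroid_k scale \<delta> G br k \<Longrightarrow> D \<in> centroid scale \<delta> G br"
| add: "D \<in> centroid scale \<delta> G br \<Longrightarrow> E \<in> centroid scale \<delta> G br
          \<Longrightarrow> (\<lambda>x. D x + E x) \<in> centroid scale \<delta> G br"

definition quasicentroid :: "('k::field \<Rightarrow> 'v::ab_group_add \<Rightarrow> 'v) \<Rightarrow> ('v \<Rightarrow> 'v \<Rightarrow> 'v \<Rightarrow> 'v) \<Rightarrow> ('v \<Rightarrow> 'v) set" where
  "quasicentroid scale br = {D. Vector_Spaces.linear scale scale D \<and> (\<forall>a b c. D (br a b c) = br (D a) b c)}"

definition center :: "('v::zero \<Rightarrow> 'v \<Rightarrow> 'v \<Rightarrow> 'v) \<Rightarrow> 'v set" where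
  "center br = {a. \<forall>b c. br a b c = 0}"

definition sbracket :: "('k::field \<Rightarrow> 'v::ab_group_add \<Rightarrow> 'v) \<Rightarrow> ('v \<Rightarrow> 'v) \<Rightarrow> nat \<Rightarrow> ('v \<Rightarrow> 'v) \<Rightarrow> nat \<Rightarrow> 'v \<Rightarrow> 'v" where
  "sbracket scale D1 d1 D2 d2 = (\<lambda>x. D1 (D2 x) - scale ((-1) ^ (d1 * d2)) (D2 (D1 x)))"

end

theory Submission
  imports Defs
begin

text \<open>Let \<open>E \<in> C\<^sup>k(T)\<close> be homogeneous of degree \<open>d\<close>, \<open>D \<in> QC(T)\<close> homogeneous of degree \<open>d'\<close>, and
  put \<open>X = [a,b,c]\<close>. Moving \<open>E\<close> into the middle slot of \<open>[D a, b, c] = D X\<close> and of \<open>X\<close> shows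
  that \<open>E (D X)\<close> and \<open>(-1)^(d d') D (E X)\<close> are the same multiple of \<open>[D a, E b, c]\<close>. Moving \<open>E\<close>
  back out of the first slot turns this into \<open>[[E,D] a, b, c] = \<delta>\<^sup>k ([E,D] X) = 0\<close>
  for homogeneous \<open>a, b, c\<close>, hence for all of them by trilinearity. A homogeneous element of
  \<open>C(T)\<close> is a sum of homogeneous elements of the \<open>C\<^sup>k(T)\<close> of its own degree, and the
  superbracket is additive in its first argument.\<close>

lemmas linear_map_add = module_hom.add[OF module_hom_linearI]
  and linear_map_diff = module_hom.diff[OF module_hom_linearI]
  and linear_map_zero = module_hom.zero[OF module_hom_linearI]
  and linear_map_scale = module_hom.scale[OF module_hom_linearI]

lemma neg_one_power_mult_mod2: "(-1::'a::ring_1) ^ (d * (n mod 2)) = (-1) ^ (d * n)"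
  by (metis minus_one_power_iff mult.commute power_mult even_mod_2_iff)

context vector_space
begin

lemma sbracket_add_left:
  assumes "Vector_Spaces.linear scale scale D"
  shows "sbracket scale (\<lambda>x. E x + F x) d D e x = sbracket scale E d D e x + sbracket scale F d D e x"
  using linear_map_add[OF assms] by (simp add: sbracket_def scale_right_distrib algebra_simps)

lemma linear_sbracket:
  assumes "Vector_Spaces.linear scale scale E" and "Vector_Spaces.linear scale scale D"
  shows "Vector_Spaces.linear scale scale (sbracket scale E d D e)"
  using assms
  by (simp add: Vector_Spaces.linear_iff sbracket_def scale_right_distrib scale_right_diff_distrib
      scale_scale algebra_simps mult.commute)

end

context
  fixes scale :: "'k::field \<Rightarrow> 'v::ab_group_add \<Rightarrow> 'v" and G :: "nat \<Rightarrow> 'v set"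
  assumes graded: "graded_space scale G"
begin

interpretation vector_space scale
  using graded by (simp add: graded_space_def)

lemma graded_zero: "i < 2 \<Longrightarrow> 0 \<in> G i"
  and graded_add: "i < 2 \<Longrightarrow> x \<in> G i \<Longrightarrow> y \<in> G i \<Longrightarrow> x + y \<in> G i"
  and graded_scale: "i < 2 \<Longrightarrow> x \<in> G i \<Longrightarrow> scale c x \<in> G i"
  and graded_inter: "G 0 \<inter> G 1 = {0}"
  and graded_decomp: "\<exists>a\<in>G 0. \<exists>b\<in>G 1. v = a + b"
  using graded by (simp_all add: graded_space_def)

lemma graded_diff: "i < 2 \<Longrightarrow> x \<in> G i \<Longrightarrow> y \<in> G i \<Longrightarrow> x - y \<in> G i"
  using graded_add[of i x "scale (-1) y"] graded_scale[of i y "-1"] by simp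

lemma linear_eq_0_if_homogeneous_eq_0:
  assumes "Vector_Spaces.linear scale scale f" and "\<And>i a. i < 2 \<Longrightarrow> a \<in> G i \<Longrightarrow> f a = 0"
  shows "f x = 0"
proof -
  obtain a b where "a \<in> G 0" "b \<in> G 1" "x = a + b"
    using graded_decomp by blast
  then show ?thesis
    using assms(2)[of 0 a] assms(2)[of 1 b] linear_map_add[OF assms(1)] by simp
qed

lemma hom_end_zero: "d < 2 \<Longrightarrow> hom_end scale G (\<lambda>x. 0) d"
  by (simp add: hom_end_def Vector_Spaces.linear_iff vector_space_axioms graded_zero)

lemma hom_end_add:
  "hom_end scale G D d \<Longrightarrow> hom_end scale G E d \<Longrightarrow> hom_end scale G (\<lambda>x. D x + E x) d"
  by (auto simp: hom_end_def Vector_Spaces.linear_iff scale_right_distrib intro!: graded_add)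

lemma hom_end_diff:
  "hom_end scale G D d \<Longrightarrow> hom_end scale G E d \<Longrightarrow> hom_end scale G (\<lambda>x. D x - E x) d"
  by (auto simp: hom_end_def Vector_Spaces.linear_iff scale_right_diff_distrib intro!: graded_diff)

lemma hom_end_two_degrees_eq_0:
  assumes "hom_end scale G D d" and "hom_end scale G D e" and "d \<noteq> e"
  shows "D = (\<lambda>x. 0)"
proof
  fix x
  show "D x = 0"
  proof (rule linear_eq_0_if_homogeneous_eq_0[of D])
    show "Vector_Spaces.linear scale scale D"
      using assms(1) by (simp add: hom_end_def)
  next
    fix i a assume "i < 2" "a \<in> G i"
    then have "D a \<in> G ((i + d) mod 2)" "D a \<in> G ((i + e) mod 2)" "d < 2" "e < 2"
      using assms(1,2) by (auto simp: hom_end_def)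
    then have "D a \<in> G 0 \<inter> G 1"
      using \<open>d \<noteq> e\<close> \<open>i < 2\<close> by (cases i; cases d; cases e; auto)
    then show "D a = 0"
      using graded_inter by auto
  qed
qed

end

inductive_set hom_centroid :: "('k::field \<Rightarrow> 'v::ab_group_add \<Rightarrow> 'v) \<Rightarrow> 'k \<Rightarrow> (nat \<Rightarrow> 'v set)
    \<Rightarrow> ('v \<Rightarrow> 'v \<Rightarrow> 'v \<Rightarrow> 'v) \<Rightarrow> nat \<Rightarrow> ('v \<Rightarrow> 'v) set"
  for scale \<delta> G br d where
  zero: "(\<lambda>x. 0) \<in> hom_centroid scale \<delta> G br d"
| comp: "D \<in> centroid_k scale \<delta> G br k \<Longrightarrow> hom_end scale G D d \<Longrightarrow> D \<in> hom_centroid scale \<delta> G br d"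
| add: "D \<in> hom_centroid scale \<delta> G br d \<Longrightarrow> E \<in> hom_centroid scale \<delta> G br d
          \<Longrightarrow> (\<lambda>x. D x + E x) \<in> hom_centroid scale \<delta> G br d"

lemma hom_centroid_hom_end:
  assumes "graded_space scale G" and "P \<in> hom_centroid scale \<delta> G br d" and "d < 2"
  shows "hom_end scale G P d"
  using assms(2,3) by induction (auto simp: hom_end_zero[OF assms(1)] hom_end_add[OF assms(1)])

lemma centroid_split_degrees:
  assumes "D \<in> centroid scale \<delta> G br"
  shows "\<exists>P0 P1. P0 \<in> hom_centroid scale \<delta> G br 0 \<and> P1 \<in> hom_centroid scale \<delta> G br 1
           \<and> D = (\<lambda>x. P0 x + P1 x)"
  using assms
proof induction
  case zero
  then show ?case
    using hom_centroid.zero by fastforce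
next
  case (comp D k)
  then obtain dD where "hom_end scale G D dD"
    by (auto simp: centroid_k_def)
  moreover have "dD = 0 \<or> dD = 1"
    using calculation by (auto simp: hom_end_def)
  ultimately show ?case
    using comp hom_centroid.comp[of D] hom_centroid.zero by fastforce
next
  case (add D E)
  then obtain P0 P1 Q0 Q1 where
    "P0 \<in> hom_centroid scale \<delta> G br 0" "Q0 \<in> hom_centroid scale \<delta> G br 0"
    "P1 \<in> hom_centroid scale \<delta> G br 1" "Q1 \<in> hom_centroid scale \<delta> G br 1"
    "D = (\<lambda>x. P0 x + P1 x)" "E = (\<lambda>x. Q0 x + Q1 x)"
    by blast
  then show ?case
    by (intro exI[of _ "\<lambda>x. P0 x + Q0 x"] exI[of _ "\<lambda>x. P1 x + Q1 x"])
      (auto intro: hom_centroid.add simp: add_ac)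
qed

lemma centroid_hom_end_imp_hom_centroid:
  assumes graded: "graded_space scale G"
    and "D \<in> centroid scale \<delta> G br" and D: "hom_end scale G D d"
  shows "D \<in> hom_centroid scale \<delta> G br d"
proof -
  obtain P0 P1 where P: "P0 \<in> hom_centroid scale \<delta> G br 0" "P1 \<in> hom_centroid scale \<delta> G br 1"
    and D_eq: "D = (\<lambda>x. P0 x + P1 x)"
    using centroid_split_degrees assms(2) by blast
  have hom_P: "hom_end scale G P0 0" "hom_end scale G P1 1"
    using hom_centroid_hom_end[OF graded] P by auto
  have "d = 0 \<or> d = 1"
    using D by (auto simp: hom_end_def)
  then show ?thesis
  proof
    assume "d = 0"
    then have "hom_end scale G (\<lambda>x. D x - P0 x) 0"
      using hom_end_diff[OF graded _ hom_P(1)] D by simp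
    then have "hom_end scale G P1 0"
      by (simp add: D_eq)
    then have "P1 = (\<lambda>x. 0)"
      using hom_end_two_degrees_eq_0[OF graded _ hom_P(2)] by simp
    then have "D = P0"
      by (simp add: D_eq)
    with P \<open>d = 0\<close> show ?thesis by simp
  next
    assume "d = 1"
    then have "hom_end scale G (\<lambda>x. D x - P1 x) 1"
      using hom_end_diff[OF graded _ hom_P(2)] D by simp
    then have "hom_end scale G P0 1"
      by (simp add: D_eq)
    then have "P0 = (\<lambda>x. 0)"
      using hom_end_two_degrees_eq_0[OF graded hom_P(1)] by simp
    then have "D = P1"
      by (simp add: D_eq)
    with P \<open>d = 1\<close> show ?thesis by simp
  qed
qed

context
  fixes scale :: "'k::field \<Rightarrow> 'v::ab_group_add \<Rightarrow> 'v"
    and \<delta> :: 'k and G :: "nat \<Rightarrow> 'v set" and br :: "'v \<Rightarrow> 'v \<Rightarrow> 'v \<Rightarrow> 'v"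
  assumes T: "djlsts scale \<delta> G br"
begin

lemma djlsts_graded_space: "graded_space scale G"
  using T by (simp add: djlsts_def)

interpretation vector_space scale
  using djlsts_graded_space by (simp add: graded_space_def)

lemma linear_bracket_1: "Vector_Spaces.linear scale scale (\<lambda>a. br a b c)"
  and linear_bracket_2: "Vector_Spaces.linear scale scale (\<lambda>b. br a b c)"
  and linear_bracket_3: "Vector_Spaces.linear scale scale (\<lambda>c. br a b c)"
  using T by (simp_all add: djlsts_def trilinear_def)

lemma delta_power_square: "\<delta> ^ k * \<delta> ^ k = 1"
proof -
  have "\<delta> * \<delta> = 1"
    using T by (auto simp: djlsts_def)
  then show ?thesis
    by (metis power_mult_distrib power_one)
qed

lemma centroid_k_homogeneous_rules:
  assumes "E \<in> centroid_k scale \<delta> G br k" and hom_E: "hom_end scale G E d"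
    and "i < 2" "j < 2" "l < 2" "a \<in> G i" "b \<in> G j" "c \<in> G l"
  shows "br (E a) b c = scale (\<delta> ^ k) (E (br a b c))"
    and "scale (\<delta> ^ k * (-1) ^ (d * i)) (br a (E b) c) = E (br a b c)"
proof -
  obtain dD where hom_dD: "hom_end scale G E dD" and rules:
    "scale (\<delta> ^ k) (br (E a) b c) = E (br a b c)"
    "scale (\<delta> ^ k * (-1) ^ (dD * i)) (br a (E b) c) = E (br a b c)"
    using assms unfolding centroid_k_def by blast
  have "br (E a) b c = scale (\<delta> ^ k) (E (br a b c))
    \<and> scale (\<delta> ^ k * (-1) ^ (d * i)) (br a (E b) c) = E (br a b c)"
  proof (cases "dD = d")
    case True
    have "br (E a) b c = scale (\<delta> ^ k) (scale (\<delta> ^ k) (br (E a) b c))"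
      by (simp add: scale_scale delta_power_square)
    with rules True show ?thesis
      by simp
  next
    case False
    then have "E = (\<lambda>x. 0)"
      using hom_end_two_degrees_eq_0[OF djlsts_graded_space hom_E hom_dD] by simp
    then show ?thesis
      using linear_map_zero[OF linear_bracket_1] linear_map_zero[OF linear_bracket_2] by simp
  qed
  then show "br (E a) b c = scale (\<delta> ^ k) (E (br a b c))"
    and "scale (\<delta> ^ k * (-1) ^ (d * i)) (br a (E b) c) = E (br a b c)"
    by simp_all
qed

lemma centroid_k_sbracket_quasicentroid_homogeneous:
  assumes E: "E \<in> centroid_k scale \<delta> G br k" "hom_end scale G E d"
    and D: "D \<in> quasicentroid scale br" "hom_end scale G D e"
    and abc: "i < 2" "j < 2" "l < 2" "a \<in> G i" "b \<in> G j" "c \<in> G l"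
  shows "br (sbracket scale E d D e a) b c = 0"
proof -
  have lin_D: "Vector_Spaces.linear scale scale D"
    and D_bracket: "\<And>x y z. D (br x y z) = br (D x) y z"
    using D(1) by (auto simp: quasicentroid_def)
  define s where "s = \<delta> ^ k"
  define \<sigma> where "\<sigma> = (-1::'k) ^ (d * e)"
  define \<tau> where "\<tau> = (-1::'k) ^ (d * i)"
  define X where "X = br a b c"
  define u where "u = br (D a) (E b) c"
  have "D a \<in> G ((i + e) mod 2)"
    using D(2) abc by (simp add: hom_end_def)
  note rules_Da = centroid_k_homogeneous_rules[OF E _ abc(2,3) this abc(5,6)]
  note rules_a = centroid_k_homogeneous_rules[OF E abc]
  have "(-1::'k) ^ (d * ((i + e) mod 2)) = \<sigma> * \<tau>"
    by (simp add: neg_one_power_mult_mod2 \<sigma>_def \<tau>_def distrib_left power_add)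
  then have ED_X: "E (D X) = scale (s * (\<sigma> * \<tau>)) u"
    using rules_Da(2) by (simp add: X_def u_def s_def D_bracket)
  have DE_X: "D (E X) = scale (s * \<tau>) u"
    using rules_a(2) linear_map_scale[OF lin_D] by (metis D_bracket X_def s_def \<tau>_def u_def)
  have commute_on_X: "E (D X) = scale \<sigma> (D (E X))"
    using ED_X DE_X by (simp add: ac_simps)
  have "br (sbracket scale E d D e a) b c = br (E (D a)) b c - scale \<sigma> (br (D (E a)) b c)"
    using linear_map_diff[OF linear_bracket_1] linear_map_scale[OF linear_bracket_1]
    by (simp add: sbracket_def \<sigma>_def)
  also have "\<dots> = scale s (E (D X)) - scale \<sigma> (scale s (D (E X)))"
  proof -
    have "br (E (D a)) b c = scale s (E (D X))"
      using rules_Da(1) by (simp add: D_bracket X_def s_def)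
    moreover have "br (D (E a)) b c = scale s (D (E X))"
      using D_bracket[of "E a" b c, symmetric] rules_a(1) linear_map_scale[OF lin_D]
      by (simp add: X_def s_def)
    ultimately show ?thesis
      by simp
  qed
  also have "\<dots> = 0"
    by (simp add: commute_on_X mult.commute)
  finally show ?thesis .
qed

lemma hom_centroid_sbracket_quasicentroid_homogeneous:
  assumes "P \<in> hom_centroid scale \<delta> G br d"
    and D: "D \<in> quasicentroid scale br" "hom_end scale G D e"
    and abc: "i < 2" "j < 2" "l < 2" "a \<in> G i" "b \<in> G j" "c \<in> G l"
  shows "br (sbracket scale P d D e a) b c = 0"
  using assms(1)
proof induction
  case zero
  have "Vector_Spaces.linear scale scale D"
    using D(2) by (simp add: hom_end_def)
  then show ?case
    using linear_map_zero[of scale scale D] linear_map_zero[OF linear_bracket_1]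
    by (simp add: sbracket_def)
next
  case (comp E k)
  then show ?case
    using centroid_k_sbracket_quasicentroid_homogeneous[OF _ _ D abc] by blast
next
  case (add E F)
  have "Vector_Spaces.linear scale scale D"
    using D(2) by (simp add: hom_end_def)
  then show ?case
    using add.IH sbracket_add_left linear_map_add[OF linear_bracket_1]
    by simp
qed

lemma sbracket_centroid_quasicentroid_in_center:
  assumes D1: "D1 \<in> centroid scale \<delta> G br" "hom_end scale G D1 d1"
    and D2: "D2 \<in> quasicentroid scale br" "hom_end scale G D2 d2"
  shows "sbracket scale D1 d1 D2 d2 x \<in> center br"
proof -
  let ?S = "sbracket scale D1 d1 D2 d2"
  have hom_centroid: "D1 \<in> hom_centroid scale \<delta> G br d1"
    using centroid_hom_end_imp_hom_centroid[OF djlsts_graded_space D1] .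
  have lin_S: "Vector_Spaces.linear scale scale ?S"
    using D1(2) D2(2) linear_sbracket by (simp add: hom_end_def)
  note vanish = linear_eq_0_if_homogeneous_eq_0[OF djlsts_graded_space]
  have "br (?S x) y z = 0" for y z
  proof (rule vanish[OF linear_bracket_3])
    fix l c assume c: "l < 2" "c \<in> G l"
    show "br (?S x) y c = 0"
    proof (rule vanish[OF linear_bracket_2])
      fix j b assume b: "j < 2" "b \<in> G j"
      show "br (?S x) b c = 0"
      proof (rule vanish[OF Vector_Spaces.linear_compose[OF lin_S linear_bracket_1, unfolded o_def]])
        fix i a assume "i < 2" "a \<in> G i"
        then show "br (?S a) b c = 0"
          using hom_centroid_sbracket_quasicentroid_homogeneous[OF hom_centroid D2] b c by blast
      qed
    qed
  qed
  then show ?thesis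
    by (simp add: center_def)
qed

end

theorem theorem2p16:
  fixes scale :: "'k::field \<Rightarrow> 'v::ab_group_add \<Rightarrow> 'v"
    and \<delta> :: 'k and G :: "nat \<Rightarrow> 'v set" and br :: "'v \<Rightarrow> 'v \<Rightarrow> 'v \<Rightarrow> 'v"
  assumes "djlsts scale \<delta> G br"
  shows "(\<forall>D1 d1 D2 d2. D1 \<in> centroid scale \<delta> G br \<and> hom_end scale G D1 d1
            \<and> D2 \<in> quasicentroid scale br \<and> hom_end scale G D2 d2
            \<longrightarrow> (\<forall>x. sbracket scale D1 d1 D2 d2 x \<in> center br))
       \<and> (center br = {0} \<longrightarrow>
          (\<forall>D1 d1 D2 d2. D1 \<in> centroid scale \<delta> G br \<and> hom_end scale G D1 d1
            \<and> D2 \<in> quasicentroid scale br \<and> hom_end scale G D2 d2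
            \<longrightarrow> sbracket scale D1 d1 D2 d2 = (\<lambda>x. 0)))"
  using sbracket_centroid_quasicentroid_in_center[OF assms] by auto

end
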